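(* Assume $H_0$ holds, i.e. $Z_1,\ldots,Z_n$ are i.i.d. with some (arbitrary) law $P_1$ on $\mathcal{Z}$, and the scores are produced by a symmetric transformation. Then: (i) $T_n=\mathbb{A}(R_1,\ldots,R_n)$ has the same distribution as $\mathbb{A}(\pi(1),\ldots,\pi(n))$, where $\pi$ is uniformly distributed over all permutations of $[n]=\{1,\ldots,n\}$; (ii) for every integer $B\ge 1$, the randomized p-value $p_B$ is uniformly distributed on $[0,1]$.
   Context: Let $Z_1,\ldots,Z_n$ be independent random elements of a measurable space $\mathcal{Z}$ and $\mathcal{D}=(Z_1,\ldots,Z_n)$. A measurable function $\mathbb{S}:\mathcal{Z}\times\mathcal{Z}^n\to\mathbb{R}$ is a symmetric transformation if $\mathbb{S}(z;\mathcal{D})=\mathbb{S}(z;\mathcal{D}_\pi)$ for every $z\in\mathcal{Z}$ and every permutation $\pi$ of $[n]$, where $\mathcal{D}_\pi=(Z_{\pi(1)},\ldots,Z_{\pi(n)})$. The scores are $S_i=\mathbb{S}(Z_i;\mathcal{D})+\epsilon e_i$, $i\in[n]$, where $\epsilon>0$ is a fixed constant and $e_1,\ldots,e_n$ are i.i.d. $\mathcal{N}(0,1)$ independent of the data (this breaks ties). The rank of $S_i$ is $R_i=|\{j\in[n]:S_j\le S_i\}|$. An aggregation function $\mathbb{A}$ maps vectors of ranks in $[n]^n$ to $\mathbb{R}$, and the test statistic is $T_n=\mathbb{A}(R_1,\ldots,R_n)$. For an integer $B\ge1$, let $\pi_1,\ldots,\pi_B$ be i.i.d. uniform random permutations of $[n]$,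 write $\mathbb{A}(\pi_b)=\mathbb{A}(\pi_b(1),\ldots,\pi_b(n))$, let $U\sim\mathcal{U}(0,1)$, with $\pi_1,\ldots,\pi_B,U$ mutually independent and independent of the data and of $(e_i)$, and define $p_B=\frac{\sum_{b=1}^B\mathbf{1}\{\mathbb{A}(\pi_b)>T_n\}+U\big[1+\sum_{b=1}^B\mathbf{1}\{\mathbb{A}(\pi_b)=T_n\}\big]}{B+1}.$ *)

theory Defs
  imports "HOL-Probability.Probability" "HOL-Combinatorics.Permutations"
begin

text \<open>Indices are [n] = {1..n}. Data sets D and noise vectors e are (extensional)
  functions on {1..n}; permutations of [n] are functions permuting {1..n}.\<close>

definition perms :: "nat \<Rightarrow> (nat \<Rightarrow> nat) set" where
  "perms n = {\<pi>. \<pi> permutes {1..n}}"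

definition unif_perm :: "nat \<Rightarrow> (nat \<Rightarrow> nat) measure" where
  "unif_perm n = measure_pmf (pmf_of_set (perms n))"

definition std_normal :: "real measure" where
  "std_normal = density lborel std_normal_density"

definition symmetric_transformation ::
  "nat \<Rightarrow> 'z measure \<Rightarrow> ('z \<Rightarrow> (nat \<Rightarrow> 'z) \<Rightarrow> real) \<Rightarrow> bool" where
  "symmetric_transformation n M S \<longleftrightarrow>
     (\<lambda>(z, D). S z D) \<in> borel_measurable (M \<Otimes>\<^sub>M PiM {1..n} (\<lambda>_. M)) \<and>
     (\<forall>z \<in> space M. \<forall>D \<in> space (PiM {1..n} (\<lambda>_. M)). \<forall>\<pi>. \<pi> permutes {1..n} \<longrightarrow>
        S z (D \<circ> \<pi>) = S z D)"

definition scores ::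
  "('z \<Rightarrow> (nat \<Rightarrow> 'z) \<Rightarrow> real) \<Rightarrow> real \<Rightarrow> (nat \<Rightarrow> 'z) \<Rightarrow> (nat \<Rightarrow> real) \<Rightarrow> nat \<Rightarrow> real" where
  "scores S \<epsilon> D e i = S (D i) D + \<epsilon> * e i"

definition rank :: "nat \<Rightarrow> (nat \<Rightarrow> real) \<Rightarrow> nat \<Rightarrow> nat" where
  "rank n s i = card {j \<in> {1..n}. s j \<le> s i}"

definition vec_list :: "nat \<Rightarrow> (nat \<Rightarrow> 'a) \<Rightarrow> 'a list" where
  "vec_list n v = map v [1..<n+1]"

definition test_stat ::
  "nat \<Rightarrow> (nat list \<Rightarrow> real) \<Rightarrow> ('z \<Rightarrow> (nat \<Rightarrow> 'z) \<Rightarrow> real) \<Rightarrow> real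
     \<Rightarrow> (nat \<Rightarrow> 'z) \<Rightarrow> (nat \<Rightarrow> real) \<Rightarrow> real" where
  "test_stat n A S \<epsilon> D e = A (vec_list n (rank n (scores S \<epsilon> D e)))"

text \<open>Randomized permutation p-value p_B, given T_n = t, permutations P b (b in 1..B) and U = u.\<close>
definition pval ::
  "nat \<Rightarrow> nat \<Rightarrow> (nat list \<Rightarrow> real) \<Rightarrow> real \<Rightarrow> (nat \<Rightarrow> nat \<Rightarrow> nat) \<Rightarrow> real \<Rightarrow> real" where
  "pval n B A t P u =
     (real (card {b \<in> {1..B}. A (vec_list n (P b)) > t})
      + u * (1 + real (card {b \<in> {1..B}. A (vec_list n (P b)) = t}))) / (real B + 1)"

definition data_noise :: "nat \<Rightarrow> 'z measure \<Rightarrow> ((nat \<Rightarrow> 'z) \<times> (nat \<Rightarrow> real)) measure" where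
  "data_noise n P1 = PiM {1..n} (\<lambda>_. P1) \<Otimes>\<^sub>M PiM {1..n} (\<lambda>_. std_normal)"

definition full_space ::
  "nat \<Rightarrow> nat \<Rightarrow> 'z measure \<Rightarrow> (((nat \<Rightarrow> 'z) \<times> (nat \<Rightarrow> real)) \<times> (nat \<Rightarrow> nat \<Rightarrow> nat) \<times> real) measure" where
  "full_space n B P1 = data_noise n P1 \<Otimes>\<^sub>M
     (PiM {1..B} (\<lambda>_. unif_perm n) \<Otimes>\<^sub>M uniform_measure lborel {0..1})"

end

theory Submission
  imports Defs
begin

text \<open>Under the null hypothesis the data together with the noise are exchangeable: permuting
  the indices of both leaves their joint law unchanged. As the scoring rule is symmetric, such a
  permutation merely permutes the scores, hence composes the rank vector with the same
  permutation. The Gaussian noise makes ties a null event, so the rank vector is almost surely a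
  permutation of \<open>[n]\<close>, and by exchangeability all permutations are equally likely; this is (i).

  By (i), \<open>T\<^sub>n\<close> and the \<open>B\<close> statistics \<open>A(\<pi>\<^sub>b)\<close> are i.i.d. Given their values, the probability
  over \<open>U\<close> that \<open>p\<^sub>B \<le> x\<close> is the share of the observed statistic when \<open>(B + 1) x\<close> units of mass are
  handed out from the top of the ranking of all \<open>B + 1\<close> statistics, tied statistics splitting
  their portion evenly. The shares of the \<open>B + 1\<close> statistics add up to \<open>min ((B + 1) x) (B + 1)\<close>
  and are exchangeable, so the observed one has expectation \<open>min x 1\<close> for \<open>x \<ge> 0\<close>, the uniform
  distribution function; this is (ii).\<close>

section \<open>Ranks\<close>

lemma card_Collect_permutes:
  assumes "\<sigma> permutes I"
  shows "card {l \<in> I. P (\<sigma> l)} = card {l \<in> I. P l}"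
proof -
  have image: "\<sigma> ` {l \<in> I. P (\<sigma> l)} = {l \<in> I. P l}"
    using Compr_image_eq[of \<sigma> I P] permutes_image[OF assms] by blast
  have inj: "inj_on \<sigma> {l \<in> I. P (\<sigma> l)}"
    using permutes_inj[OF assms] by (rule inj_on_subset) simp
  show ?thesis using card_image[OF inj] image by simp
qed

lemma rank_comp_permutes:
  assumes "\<pi> permutes {1..n}"
  shows "rank n (s \<circ> \<pi>) i = rank n s (\<pi> i)"
  using card_Collect_permutes[OF assms, of "\<lambda>j. s j \<le> s (\<pi> i)"] by (simp add: rank_def)

lemma rank_cong:
  assumes "\<And>j. j \<in> {1..n} \<Longrightarrow> s' j = s j" and "i \<in> {1..n}"
  shows "rank n s' i = rank n s i"
  unfolding rank_def using assms by (intro arg_cong[where f = card]) auto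

lemma rank_mem:
  assumes "i \<in> {1..n}"
  shows "rank n s i \<in> {1..n}"
proof -
  have "0 < rank n s i"
    unfolding rank_def using assms by (subst card_gt_0_iff) auto
  moreover have "rank n s i \<le> n"
    unfolding rank_def using card_mono[of "{1..n}" "{j \<in> {1..n}. s j \<le> s i}"] by force
  ultimately show ?thesis by simp
qed

lemma rank_strict_mono:
  assumes "a \<in> {1..n}" "b \<in> {1..n}" "s a < s b"
  shows "rank n s a < rank n s b"
proof -
  have "{j \<in> {1..n}. s j \<le> s a} \<subseteq> {j \<in> {1..n}. s j \<le> s b}"
    and "b \<in> {j \<in> {1..n}. s j \<le> s b} - {j \<in> {1..n}. s j \<le> s a}"
    using assms by auto
  then have "{j \<in> {1..n}. s j \<le> s a} \<subset> {j \<in> {1..n}. s j \<le> s b}" by blast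
  then show ?thesis unfolding rank_def by (intro psubset_card_mono) auto
qed

definition rank_perm :: "nat \<Rightarrow> (nat \<Rightarrow> real) \<Rightarrow> nat \<Rightarrow> nat" where
  "rank_perm n s i = (if i \<in> {1..n} then rank n s i else i)"

lemma vec_list_rank_perm: "vec_list n (rank_perm n s) = vec_list n (rank n s)"
  by (auto simp del: upt_Suc simp: vec_list_def rank_perm_def)

lemma rank_perm_permutes:
  assumes "inj_on s {1..n}"
  shows "rank_perm n s permutes {1..n}"
proof (rule bij_imp_permutes)
  have "inj_on (rank n s) {1..n}"
  proof (rule inj_onI)
    fix a b assume a: "a \<in> {1..n}" and b: "b \<in> {1..n}" and eq: "rank n s a = rank n s b"
    have "\<not> s a < s b" "\<not> s b < s a"
      using rank_strict_mono[OF a b, where s = s] rank_strict_mono[OF b a, where s = s] eq by auto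
    then have "s a = s b" by simp
    then show "a = b" using inj_onD[OF assms _ a b] by simp
  qed
  moreover have "rank n s ` {1..n} \<subseteq> {1..n}"
    using rank_mem by blast
  ultimately have "bij_betw (rank n s) {1..n} {1..n}"
    by (simp add: bij_betw_def endo_inj_surj)
  then show "bij_betw (rank_perm n s) {1..n} {1..n}"
    by (rule bij_betw_cong[THEN iffD1, rotated]) (simp add: rank_perm_def)
qed (auto simp: rank_perm_def)

lemma rank_perm_comp_permutes:
  assumes \<pi>: "\<pi> permutes {1..n}" and s': "\<And>i. i \<in> {1..n} \<Longrightarrow> s' i = s (\<pi> i)"
  shows "rank_perm n s' = rank_perm n s \<circ> \<pi>"
proof
  fix i
  show "rank_perm n s' i = (rank_perm n s \<circ> \<pi>) i"
  proof (cases "i \<in> {1..n}")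
    case True
    then have "rank n s' i = rank n (s \<circ> \<pi>) i" using s' by (intro rank_cong) auto
    moreover have "\<pi> i \<in> {1..n}" using True \<pi> by (metis permutes_in_image)
    ultimately show ?thesis
      using True \<pi> by (simp add: rank_perm_def rank_comp_permutes)
  next
    case False
    then have "\<pi> i = i" using \<pi> by (metis permutes_not_in)
    then show ?thesis using False by (auto simp: rank_perm_def)
  qed
qed

section \<open>Measurability of counting functions\<close>

lemma measurable_card_Collect:
  assumes "finite I" and "\<And>i. i \<in> I \<Longrightarrow> {\<omega> \<in> space M. P i \<omega>} \<in> sets M"
  shows "(\<lambda>\<omega>. card {i \<in> I. P i \<omega>}) \<in> measurable M (count_space UNIV)"
  using assms
proof (induction I rule: finite_induct)
  case (insert a I)
  have "{i \<in> insert a I. P i \<omega>} = (if P a \<omega> then insert a {i \<in> I. P i \<omega>} else {i \<in> I. P i \<omega>})"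
    for \<omega> by auto
  then have "card {i \<in> insert a I. P i \<omega>}
      = (if P a \<omega> then Suc (card {i \<in> I. P i \<omega>}) else card {i \<in> I. P i \<omega>})" for \<omega>
    using insert.hyps by simp
  moreover have "(\<lambda>\<omega>. Suc (card {i \<in> I. P i \<omega>})) \<in> measurable M (count_space UNIV)"
    using insert by (intro measurable_compose[OF _ measurable_count_space]) auto
  ultimately show ?case
    using insert by (simp add: measurable_If)
qed simp

lemma borel_measurable_card_Collect:
  assumes "finite I" and "\<And>i. i \<in> I \<Longrightarrow> {\<omega> \<in> space M. P i \<omega>} \<in> sets M"
  shows "(\<lambda>\<omega>. real (card {i \<in> I. P i \<omega>})) \<in> borel_measurable M"
proof -
  have "(real :: nat \<Rightarrow> real) \<in> measurable (count_space UNIV) borel" by simp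
  with measurable_card_Collect[OF assms] show ?thesis by (rule measurable_compose)
qed

lemma measurable_map_count_space:
  fixes f :: "'a \<Rightarrow> 'b \<Rightarrow> 'c::countable"
  assumes "\<And>x. x \<in> set xs \<Longrightarrow> (\<lambda>\<omega>. f \<omega> x) \<in> measurable M (count_space UNIV)"
  shows "(\<lambda>\<omega>. map (f \<omega>) xs) \<in> measurable M (count_space UNIV)"
  using assms
proof (induction xs)
  case (Cons x xs)
  have "(\<lambda>\<omega>. k # map (f \<omega>) xs) \<in> measurable M (count_space UNIV)" for k
    using Cons by (intro measurable_compose[OF _ measurable_count_space]) auto
  then show ?case
    using measurable_compose_countable[where f = "\<lambda>k \<omega>. k # map (f \<omega>) xs" and g = "\<lambda>\<omega>. f \<omega> x"] Cons
    by simp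
qed simp

section \<open>Products of identical factors\<close>

lemma comp_permutes_eq_restrict:
  assumes "\<pi> permutes I" and "D \<in> space (PiM I M)"
  shows "D \<circ> \<pi> = (\<lambda>i\<in>I. D (\<pi> i))"
  using assms by (auto simp: fun_eq_iff permutes_not_in space_PiM PiE_def extensional_def)

lemma measurable_comp_permutes:
  assumes "\<pi> permutes I"
  shows "(\<lambda>D. D \<circ> \<pi>) \<in> measurable (PiM I (\<lambda>_. M)) (PiM I (\<lambda>_. M))"
proof -
  have "(\<lambda>D. \<lambda>i\<in>I. D (\<pi> i)) \<in> measurable (PiM I (\<lambda>_. M)) (PiM I (\<lambda>_. M))"
    using assms by (intro measurable_restrict measurable_component_singleton) (auto simp: permutes_in_image)
  then show ?thesis
    by (rule measurable_cong[THEN iffD1, rotated]) (simp add: comp_permutes_eq_restrict[OF assms])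
qed

lemma distr_PiM_comp_permutes:
  assumes "prob_space M" and "\<pi> permutes I"
  shows "distr (PiM I (\<lambda>_. M)) (PiM I (\<lambda>_. M)) (\<lambda>D. D \<circ> \<pi>) = PiM I (\<lambda>_. M)"
proof -
  have "distr (PiM I (\<lambda>_. M)) (PiM I (\<lambda>_. M)) (\<lambda>D. D \<circ> \<pi>)
      = distr (PiM I (\<lambda>_. M)) (PiM I (\<lambda>_. M)) (\<lambda>D. \<lambda>i\<in>I. D (\<pi> i))"
    by (rule distr_cong) (simp_all add: comp_permutes_eq_restrict[OF assms(2)])
  also have "\<dots> = PiM I (\<lambda>_. M)"
    using distr_PiM_reindex[of I "\<lambda>_. M" \<pi> I] assms
    by (simp add: permutes_inj_on permutes_in_image Pi_iff)
  finally show ?thesis .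
qed

lemma distr_PiM_restrict_comp:
  assumes "finite I" and "prob_space M" and "prob_space N"
    and "g \<in> measurable M N" and "distr M N g = N"
  shows "distr (PiM I (\<lambda>_. M)) (PiM I (\<lambda>_. N)) (\<lambda>x. \<lambda>i\<in>I. g (x i)) = PiM I (\<lambda>_. N)"
proof -
  have "compose I g = (\<lambda>x. \<lambda>i\<in>I. g (x i))"
    by (rule ext) (simp add: compose_def)
  with distr_PiM_finite_prob_space'[of I "\<lambda>_. M" "\<lambda>_. N" g] assms show ?thesis
    by simp
qed

lemma nn_integral_PiM_fun_upd:
  assumes "prob_space Q" and "I = insert i J" and "f \<in> borel_measurable (PiM I (\<lambda>_. Q))"
  shows "(\<integral>\<^sup>+t. \<integral>\<^sup>+z. f (z(i := t)) \<partial>PiM J (\<lambda>_. Q) \<partial>Q) = integral\<^sup>N (PiM I (\<lambda>_. Q)) f"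
proof -
  let ?upd = "\<lambda>(t, z). z(i := t)"
  interpret J: prob_space "PiM J (\<lambda>_. Q)" using assms(1) by (rule prob_space_PiM)
  have upd: "?upd \<in> measurable (Q \<Otimes>\<^sub>M PiM J (\<lambda>_. Q)) (PiM I (\<lambda>_. Q))"
    using measurable_fun_upd[where I = I and J = J and i = i and f = snd and h = fst
        and N = "Q \<Otimes>\<^sub>M PiM J (\<lambda>_. Q)" and M = "\<lambda>_. Q"] assms(2)
    by (simp add: case_prod_beta')
  have "(\<integral>\<^sup>+t. \<integral>\<^sup>+z. f (z(i := t)) \<partial>PiM J (\<lambda>_. Q) \<partial>Q) = (\<integral>\<^sup>+p. f (?upd p) \<partial>(Q \<Otimes>\<^sub>M PiM J (\<lambda>_. Q)))"
    using J.nn_integral_fst[OF measurable_compose[OF upd assms(3)]] by (simp add: case_prod_beta')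
  also have "\<dots> = integral\<^sup>N (distr (Q \<Otimes>\<^sub>M PiM J (\<lambda>_. Q)) (PiM I (\<lambda>_. Q)) ?upd) f"
    using assms(3) by (intro nn_integral_distr[symmetric, OF upd]) simp
  also have "\<dots> = integral\<^sup>N (PiM I (\<lambda>_. Q)) f"
    using distr_pair_PiM_eq_PiM[of J "\<lambda>_. Q" i] assms(1,2) by simp
  finally show ?thesis .
qed

lemma PiM_diagonal_shift_null:
  fixes N :: "real measure"
  assumes N: "prob_space N" "sets N = sets borel" "\<And>x. emeasure N {x} = 0"
    and I: "finite I" "i \<in> I" "j \<in> I" "i \<noteq> j"
  shows "{e \<in> space (PiM I (\<lambda>_. N)). e i = a + e j} \<in> null_sets (PiM I (\<lambda>_. N))"
proof -
  let ?J = "I - {i}"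
  let ?Z = "{e \<in> space (PiM I (\<lambda>_. N)). e i = a + e j}"
  interpret N: prob_space N by (rule N(1))
  interpret J: prob_space "PiM ?J (\<lambda>_. N)" using N by (intro prob_space_PiM) auto
  interpret NJ: pair_sigma_finite N "PiM ?J (\<lambda>_. N)" by unfold_locales
  have I_eq: "insert i ?J = I" using I by auto
  have upd: "(\<lambda>(x, X). X(i := x)) \<in> measurable (N \<Otimes>\<^sub>M PiM ?J (\<lambda>_. N)) (PiM I (\<lambda>_. N))"
    using measurable_fun_upd[where I = I and J = ?J and i = i and f = snd and h = fst
        and N = "N \<Otimes>\<^sub>M PiM ?J (\<lambda>_. N)" and M = "\<lambda>_. N"] I_eq
    by (simp add: split_beta' Un_commute)
  have component: "(\<lambda>e. e k) \<in> borel_measurable (PiM I (\<lambda>_. N))" if "k \<in> I" for k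
    using measurable_component_singleton[OF that, of "\<lambda>_. N"]
    by (simp add: measurable_cong_sets[OF refl N(2)])
  have Z: "?Z \<in> sets (PiM I (\<lambda>_. N))"
    using borel_measurable_eq[OF component[OF I(2)]
        borel_measurable_add[OF borel_measurable_const component[OF I(3)]]]
    by simp
  let ?W = "(\<lambda>(x, X). X(i := x)) -` ?Z \<inter> space (N \<Otimes>\<^sub>M PiM ?J (\<lambda>_. N))"
  have "emeasure (PiM I (\<lambda>_. N)) ?Z = emeasure (N \<Otimes>\<^sub>M PiM ?J (\<lambda>_. N)) ?W"
    using distr_pair_PiM_eq_PiM[of ?J "\<lambda>_. N" i] N(1) I_eq emeasure_distr[OF upd Z] by simp
  also have "\<dots> = (\<integral>\<^sup>+X. emeasure N ((\<lambda>x. (x, X)) -` ?W) \<partial>PiM ?J (\<lambda>_. N))"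
    using measurable_sets[OF upd Z] by (rule NJ.emeasure_pair_measure_alt2)
  also have "\<dots> = 0"
  proof (rule nn_integral_zero')
    show "AE X in PiM ?J (\<lambda>_. N). emeasure N ((\<lambda>x. (x, X)) -` ?W) = 0"
    proof (rule AE_I2)
      fix X
      have "(\<lambda>x. (x, X)) -` ?W \<subseteq> {a + X j}" using I by auto
      then show "emeasure N ((\<lambda>x. (x, X)) -` ?W) = 0"
        using emeasure_mono[of _ "{a + X j}" N] N by (simp add: le_zero_eq)
    qed
  qed
  finally show ?thesis using Z by (simp add: null_sets_def)
qed

section \<open>Tie shares\<close>

definition clamp01 :: "real \<Rightarrow> real" where
  "clamp01 x = max 0 (min x 1)"

lemma mult_clamp01_divide:
  assumes "c > 0"
  shows "c * clamp01 (t / c) = max 0 (min t c)"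
  using assms by (auto simp: clamp01_def max_def min_def field_simps)

text \<open>Hand out \<open>t\<close> units of mass along the ranking of \<open>I\<close> by \<open>y\<close>, from the top, one unit per
  element at most, every class of tied elements splitting its portion evenly: element \<open>k\<close>
  then receives \<open>tie_share I y t k\<close>.\<close>

definition tie_share :: "'a set \<Rightarrow> ('a \<Rightarrow> real) \<Rightarrow> real \<Rightarrow> 'a \<Rightarrow> real" where
  "tie_share I y t k = clamp01 ((t - card {l \<in> I. y l > y k}) / card {l \<in> I. y l = y k})"

lemma tie_share_nonneg: "0 \<le> tie_share I y t k"
  and tie_share_le_1: "tie_share I y t k \<le> 1"
  by (simp_all add: tie_share_def clamp01_def)

lemma tie_share_comp_permutes:
  assumes "\<sigma> permutes I"
  shows "tie_share I (y \<circ> \<sigma>) t k = tie_share I y t (\<sigma> k)"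
  using card_Collect_permutes[OF assms, of "\<lambda>l. y l > y (\<sigma> k)"]
    card_Collect_permutes[OF assms, of "\<lambda>l. y l = y (\<sigma> k)"]
  by (simp add: tie_share_def)

lemma tie_share_Max:
  assumes "finite I" and "k \<in> I" and "y k = Max (y ` I)"
  shows "tie_share I y t k = clamp01 (t / card {l \<in> I. y l = Max (y ` I)})"
proof -
  have "{l \<in> I. y l > y k} = {}" using assms by (auto simp: not_less)
  then show ?thesis unfolding tie_share_def assms(3) by (simp only: card.empty of_nat_0 diff_zero)
qed

lemma tie_share_less_Max:
  assumes "finite I" and "k \<in> I" and "y k < Max (y ` I)"
  shows "tie_share I y t k
    = tie_share {l \<in> I. y l < Max (y ` I)} y (t - card {l \<in> I. y l = Max (y ` I)}) k"
proof -
  let ?C = "{l \<in> I. y l = Max (y ` I)}" and ?I' = "{l \<in> I. y l < Max (y ` I)}"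
  have "{l \<in> I. y l > y k} = ?C \<union> {l \<in> ?I'. y l > y k}"
    using assms by (auto simp: less_le)
  moreover have "card (?C \<union> {l \<in> ?I'. y l > y k}) = card ?C + card {l \<in> ?I'. y l > y k}"
    using assms(1) by (intro card_Un_disjoint) auto
  moreover have "{l \<in> I. y l = y k} = {l \<in> ?I'. y l = y k}"
    using assms(3) by auto
  ultimately show ?thesis by (simp add: tie_share_def algebra_simps)
qed

lemma sum_tie_share:
  assumes "finite I"
  shows "(\<Sum>k\<in>I. tie_share I y t k) = max 0 (min t (card I))"
  using assms
proof (induction "card I" arbitrary: I t rule: less_induct)
  case less
  show ?case
  proof (cases "I = {}")
    case False
    let ?C = "{l \<in> I. y l = Max (y ` I)}" and ?I' = "{l \<in> I. y l < Max (y ` I)}"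
    have "y l \<le> Max (y ` I)" if "l \<in> I" for l using less.prems that by simp
    then have split: "I = ?C \<union> ?I'" "?C \<inter> ?I' = {}" by (auto simp: less_le)
    have "Max (y ` I) \<in> y ` I" using False less.prems by simp
    then have "card ?C > 0" using less.prems by (auto simp: card_gt_0_iff)
    moreover have card_I: "card I = card ?C + card ?I'"
      using less.prems split by (metis card_Un_disjoint finite_Un)
    ultimately have "card ?I' < card I" by simp
    have "(\<Sum>k\<in>?C. tie_share I y t k) = card ?C * clamp01 (t / card ?C)"
      using less.prems by (simp add: tie_share_Max)
    also have "\<dots> = max 0 (min t (card ?C))"
      using \<open>card ?C > 0\<close> by (simp add: mult_clamp01_divide)
    finally have sum_C: "(\<Sum>k\<in>?C. tie_share I y t k) = max 0 (min t (card ?C))" .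
    have "(\<Sum>k\<in>?I'. tie_share I y t k) = (\<Sum>k\<in>?I'. tie_share ?I' y (t - card ?C) k)"
      using less.prems by (intro sum.cong) (simp_all add: tie_share_less_Max)
    also have "\<dots> = max 0 (min (t - card ?C) (card ?I'))"
      using \<open>card ?I' < card I\<close> less.prems by (intro less.hyps) simp_all
    finally have sum_I': "(\<Sum>k\<in>?I'. tie_share I y t k) = max 0 (min (t - card ?C) (card ?I'))" .
    have "(\<Sum>k\<in>I. tie_share I y t k) = (\<Sum>k\<in>?C. tie_share I y t k) + (\<Sum>k\<in>?I'. tie_share I y t k)"
      using sum.union_disjoint[of ?C ?I' "tie_share I y t"] less.prems split by simp
    also have "\<dots> = max 0 (min t (card I))"
      unfolding sum_C sum_I' card_I using \<open>card ?C > 0\<close> by (simp add: max_def min_def)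
    finally show ?thesis .
  qed simp
qed

lemma measurable_tie_share:
  assumes "sets Q = sets borel" and "finite I" and "k \<in> I"
  shows "(\<lambda>y. tie_share I y t k) \<in> borel_measurable (PiM I (\<lambda>_. Q))"
proof -
  have component: "(\<lambda>y. y l) \<in> borel_measurable (PiM I (\<lambda>_. Q))" if "l \<in> I" for l
    using measurable_component_singleton[OF that, of "\<lambda>_. Q"]
    by (simp add: measurable_cong_sets[OF refl assms(1)])
  have "(\<lambda>y. real (card {l \<in> I. y l > y k})) \<in> borel_measurable (PiM I (\<lambda>_. Q))"
    and "(\<lambda>y. real (card {l \<in> I. y l = y k})) \<in> borel_measurable (PiM I (\<lambda>_. Q))"
    using assms(2,3) component
    by (auto intro!: borel_measurable_card_Collect borel_measurable_less borel_measurable_eq)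
  then show ?thesis
    unfolding tie_share_def clamp01_def by measurable
qed

lemma integrable_tie_share:
  assumes "prob_space Q" and "sets Q = sets borel" and "finite I" and "k \<in> I"
  shows "integrable (PiM I (\<lambda>_. Q)) (\<lambda>y. tie_share I y t k)"
proof -
  interpret M: prob_space "PiM I (\<lambda>_. Q)" using assms(1) by (rule prob_space_PiM)
  show ?thesis
    using measurable_tie_share[OF assms(2-4)]
    by (intro M.integrable_const_bound[where B = 1]) (simp_all add: tie_share_nonneg tie_share_le_1)
qed

text \<open>The coordinates of a product of copies of \<open>Q\<close> are exchangeable, so every element has the same
  expected tie share, and the shares add up deterministically.\<close>

lemma integral_tie_share:
  assumes "prob_space Q" and "sets Q = sets borel" and "finite I" and "k \<in> I"
  shows "integral\<^sup>L (PiM I (\<lambda>_. Q)) (\<lambda>y. tie_share I y t k) = max 0 (min t (card I)) / card I"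
proof -
  let ?M = "PiM I (\<lambda>_. Q)"
  interpret M: prob_space ?M using assms(1) by (intro prob_space_PiM)
  have exchange: "integral\<^sup>L ?M (\<lambda>y. tie_share I y t l) = integral\<^sup>L ?M (\<lambda>y. tie_share I y t k)"
    if l: "l \<in> I" for l
  proof -
    let ?\<sigma> = "Transposition.transpose k l"
    have \<sigma>: "?\<sigma> permutes I" using assms(4) l by (rule permutes_swap_id)
    have "integral\<^sup>L ?M (\<lambda>y. tie_share I y t k) = integral\<^sup>L (distr ?M ?M (\<lambda>y. y \<circ> ?\<sigma>)) (\<lambda>y. tie_share I y t k)"
      using distr_PiM_comp_permutes[OF assms(1) \<sigma>] by simp
    also have "\<dots> = integral\<^sup>L ?M (\<lambda>y. tie_share I y t l)"
      using measurable_tie_share[OF assms(2,3,4)]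
      by (subst integral_distr[OF measurable_comp_permutes[OF \<sigma>]]) (simp_all add: tie_share_comp_permutes[OF \<sigma>])
    finally show ?thesis by simp
  qed
  have "card I * integral\<^sup>L ?M (\<lambda>y. tie_share I y t k) = (\<Sum>l\<in>I. integral\<^sup>L ?M (\<lambda>y. tie_share I y t l))"
    using exchange by simp
  also have "\<dots> = integral\<^sup>L ?M (\<lambda>y. \<Sum>l\<in>I. tie_share I y t l)"
    using integrable_tie_share[OF assms(1-3)] by (intro Bochner_Integration.integral_sum[symmetric]) simp
  also have "\<dots> = max 0 (min t (card I))"
    using assms(3) by (simp add: sum_tie_share M.prob_space)
  finally have "card I * integral\<^sup>L ?M (\<lambda>y. tie_share I y t k) = max 0 (min t (card I))" .
  moreover have "card I > 0" using assms(3,4) by (auto simp: card_gt_0_iff)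
  ultimately show ?thesis by (simp add: eq_divide_eq mult.commute)
qed

lemma nn_integral_tie_share:
  assumes "prob_space Q" and "sets Q = sets borel" and "finite I" and "k \<in> I"
  shows "(\<integral>\<^sup>+y. tie_share I y t k \<partial>PiM I (\<lambda>_. Q)) = max 0 (min t (card I)) / card I"
  using integrable_tie_share[OF assms] integral_tie_share[OF assms]
  by (subst nn_integral_eq_integral) (simp_all add: tie_share_nonneg)

section \<open>Randomized p-values of i.i.d. statistics\<close>

abbreviation uniform01 :: "real measure" where
  "uniform01 \<equiv> uniform_measure lborel {0..1}"

lemma prob_space_uniform01: "prob_space uniform01"
  by (intro prob_space_uniform_measure) auto

lemma emeasure_uniform01_atMost: "emeasure uniform01 {..c} = ennreal (clamp01 c)"
proof -
  have "{0..1} \<inter> {..c} = {0..min c 1}" if "c \<ge> 0" using that by auto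
  then have "emeasure lborel ({0..1} \<inter> {..c}) = ennreal (clamp01 c)"
    by (cases "c \<ge> 0") (auto simp: clamp01_def)
  then show ?thesis by (simp add: emeasure_uniform_measure divide_ennreal_def)
qed

definition pvalue :: "nat \<Rightarrow> real \<Rightarrow> (nat \<Rightarrow> real) \<Rightarrow> real \<Rightarrow> real" where
  "pvalue B t z u =
     (real (card {b \<in> {1..B}. z b > t}) + u * (1 + real (card {b \<in> {1..B}. z b = t})))
       / (real B + 1)"

lemma emeasure_pvalue_le:
  "emeasure uniform01 {u. pvalue B t z u \<le> x} = tie_share {0..B} (z(0 := t)) ((real B + 1) * x) 0"
proof -
  let ?K = "real (card {b \<in> {1..B}. z b > t})" and ?E = "1 + real (card {b \<in> {1..B}. z b = t})"
  have "pvalue B t z u \<le> x \<longleftrightarrow> ?K + u * ?E \<le> (real B + 1) * x" for u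
    unfolding pvalue_def by (simp add: divide_le_eq add_pos_nonneg algebra_simps)
  also have "\<dots> u \<longleftrightarrow> u \<le> ((real B + 1) * x - ?K) / ?E" for u
    by (simp add: le_divide_eq add_pos_nonneg algebra_simps)
  finally have "{u. pvalue B t z u \<le> x} = {..((real B + 1) * x - ?K) / ?E}" by auto
  moreover have "{l \<in> {0..B}. (z(0 := t)) l > (z(0 := t)) 0} = {b \<in> {1..B}. z b > t}"
    and "{l \<in> {0..B}. (z(0 := t)) l = (z(0 := t)) 0} = insert 0 {b \<in> {1..B}. z b = t}"
    by auto
  ultimately show ?thesis
    by (simp add: emeasure_uniform01_atMost tie_share_def)
qed

lemma measurable_pvalue:
  assumes "sets Q = sets borel"
  shows "(\<lambda>(t, z, u). pvalue B t z u) \<in> borel_measurable (Q \<Otimes>\<^sub>M (PiM {1..B} (\<lambda>_. Q) \<Otimes>\<^sub>M uniform01))"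
    (is "_ \<in> borel_measurable ?M")
proof -
  have t: "fst \<in> borel_measurable ?M"
    using measurable_fst[of Q] by (simp add: measurable_cong_sets[OF refl assms])
  have z: "(\<lambda>\<omega>. fst (snd \<omega>) b) \<in> borel_measurable ?M" if "b \<in> {1..B}" for b
    using measurable_compose[OF measurable_compose[OF measurable_snd measurable_fst]
        measurable_component_singleton[OF that, of "\<lambda>_. Q"]]
    by (simp add: measurable_cong_sets[OF refl assms])
  have u: "(\<lambda>\<omega>. snd (snd \<omega>)) \<in> borel_measurable ?M"
    using measurable_compose[OF measurable_snd measurable_snd, of Q "PiM {1..B} (\<lambda>_. Q)" uniform01]
    by simp
  have "(\<lambda>\<omega>. real (card {b \<in> {1..B}. fst (snd \<omega>) b > fst \<omega>})) \<in> borel_measurable ?M"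
    and "(\<lambda>\<omega>. real (card {b \<in> {1..B}. fst (snd \<omega>) b = fst \<omega>})) \<in> borel_measurable ?M"
    using t z by (auto intro!: borel_measurable_card_Collect borel_measurable_less borel_measurable_eq)
  with u have "(\<lambda>\<omega>. pvalue B (fst \<omega>) (fst (snd \<omega>)) (snd (snd \<omega>))) \<in> borel_measurable ?M"
    unfolding pvalue_def by measurable
  then show ?thesis by (simp add: case_prod_beta')
qed

lemma emeasure_pvalue_atMost:
  assumes "prob_space Q" and "sets Q = sets borel"
  shows "emeasure (distr (Q \<Otimes>\<^sub>M (PiM {1..B} (\<lambda>_. Q) \<Otimes>\<^sub>M uniform01)) lborel
      (\<lambda>(t, z, u). pvalue B t z u)) {..x} = ennreal (clamp01 x)"
proof -
  let ?P = "PiM {1..B} (\<lambda>_. Q)" and ?Y = "PiM {0..B} (\<lambda>_. Q)" and ?c = "(real B + 1) * x"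
  let ?M = "Q \<Otimes>\<^sub>M (?P \<Otimes>\<^sub>M uniform01)"
  let ?S = "(\<lambda>(t, z, u). pvalue B t z u) -` {..x} \<inter> space ?M"
  interpret U: prob_space uniform01 by (rule prob_space_uniform01)
  interpret PU: prob_space "?P \<Otimes>\<^sub>M uniform01"
    using assms(1) by (intro prob_space_pair prob_space_PiM U.prob_space_axioms)
  have S: "?S \<in> sets ?M"
    using measurable_pvalue[OF assms(2)] by (rule measurable_sets) simp
  have share: "(\<lambda>y. tie_share {0..B} y ?c 0) \<in> borel_measurable ?Y"
    by (rule measurable_tie_share[OF assms(2)]) simp_all
  have "emeasure ?M ?S = (\<integral>\<^sup>+t. emeasure (?P \<Otimes>\<^sub>M uniform01) (Pair t -` ?S) \<partial>Q)"
    by (rule PU.emeasure_pair_measure_alt[OF S])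
  also have "\<dots> = (\<integral>\<^sup>+t. \<integral>\<^sup>+z. emeasure uniform01 (Pair z -` Pair t -` ?S) \<partial>?P \<partial>Q)"
    using sets_Pair1[OF S] by (intro nn_integral_cong U.emeasure_pair_measure_alt)
  also have "\<dots> = (\<integral>\<^sup>+t. \<integral>\<^sup>+z. tie_share {0..B} (z(0 := t)) ?c 0 \<partial>?P \<partial>Q)"
  proof (intro nn_integral_cong)
    fix t z assume "z \<in> space ?P"
    then have "Pair z -` Pair t -` ?S = {u. pvalue B t z u \<le> x}"
      using sets_eq_imp_space_eq[OF assms(2)] by (auto simp: space_pair_measure)
    then show "emeasure uniform01 (Pair z -` Pair t -` ?S) = tie_share {0..B} (z(0 := t)) ?c 0"
      by (simp only: emeasure_pvalue_le)
  qed
  also have "\<dots> = (\<integral>\<^sup>+y. tie_share {0..B} y ?c 0 \<partial>?Y)"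
    using share by (intro nn_integral_PiM_fun_upd[OF assms(1)]) auto
  also have "\<dots> = clamp01 x"
  proof -
    have "max 0 (min ?c (real B + 1)) / (real B + 1) = clamp01 x"
      using mult_clamp01_divide[of "real B + 1" ?c] by (simp add: divide_eq_eq add_pos_nonneg mult.commute)
    with nn_integral_tie_share[OF assms, of "{0..B}" 0 ?c] show ?thesis by (simp add: add.commute)
  qed
  finally show ?thesis
    using measurable_pvalue[OF assms(2)] by (simp add: emeasure_distr)
qed

lemma distr_pvalue_uniform01:
  assumes "prob_space Q" and "sets Q = sets borel"
  shows "distr (Q \<Otimes>\<^sub>M (PiM {1..B} (\<lambda>_. Q) \<Otimes>\<^sub>M uniform01)) lborel
      (\<lambda>(t, z, u). pvalue B t z u) = uniform01"
    (is "distr ?M lborel ?p = _")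
proof (rule cdf_unique)
  have "prob_space ?M"
    using assms(1) by (intro prob_space_pair prob_space_PiM prob_space_uniform01)
  then show "real_distribution (distr ?M lborel ?p)"
    using measurable_pvalue[OF assms(2)]
    by (auto simp: real_distribution_def real_distribution_axioms_def intro: prob_space.prob_space_distr)
  show "real_distribution uniform01"
    by (simp add: real_distribution_def real_distribution_axioms_def prob_space_uniform01)
  show "cdf (distr ?M lborel ?p) = cdf uniform01"
    unfolding cdf_def measure_def emeasure_pvalue_atMost[OF assms] emeasure_uniform01_atMost ..
qed

section \<open>Symmetric scores under the null hypothesis\<close>

lemma (in prob_space) distr_eq_pmf_of_set_if_equiprobable:
  assumes R: "R \<in> measurable M (count_space UNIV)"
    and F: "finite F" "F \<noteq> {}" and AE_in_F: "AE \<omega> in M. R \<omega> \<in> F"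
    and equiprobable: "\<And>\<sigma> \<tau>. \<sigma> \<in> F \<Longrightarrow> \<tau> \<in> F \<Longrightarrow> prob (R -` {\<sigma>} \<inter> space M) = prob (R -` {\<tau>} \<inter> space M)"
  shows "distr M (count_space UNIV) R = measure_pmf (pmf_of_set F)"
proof (rule measure_eqI_countable_AE[where \<Omega> = F])
  let ?N = "distr M (count_space UNIV) R"
  interpret N: prob_space ?N using R by (rule prob_space_distr)
  show AE_N: "AE \<sigma> in ?N. \<sigma> \<in> F"
    using AE_in_F R by (subst AE_distr_iff) auto
  show "AE \<sigma> in measure_pmf (pmf_of_set F). \<sigma> \<in> F"
    using F by (simp add: AE_measure_pmf_iff)
  fix \<sigma> assume \<sigma>: "\<sigma> \<in> F"
  have "N.prob {\<tau> \<in> space ?N. \<tau> \<in> F} = 1"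
    using AE_N by (subst N.prob_Collect_eq_1) simp_all
  then have "1 = N.prob F" by simp
  also have "\<dots> = (\<Sum>\<tau>\<in>F. N.prob {\<tau>})"
    using F(1) by (rule N.finite_measure_eq_sum_singleton) simp
  also have "\<dots> = (\<Sum>\<tau>\<in>F. N.prob {\<sigma>})"
  proof (rule sum.cong[OF refl])
    fix \<tau> assume "\<tau> \<in> F"
    then show "N.prob {\<tau>} = N.prob {\<sigma>}"
      using R by (simp add: measure_distr equiprobable[OF \<open>\<tau> \<in> F\<close> \<sigma>])
  qed
  also have "\<dots> = card F * N.prob {\<sigma>}" by simp
  finally have "N.prob {\<sigma>} = 1 / card F"
    using F by (simp add: eq_divide_eq mult.commute)
  then show "emeasure ?N {\<sigma>} = emeasure (measure_pmf (pmf_of_set F)) {\<sigma>}"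
    using F \<sigma> by (simp add: N.emeasure_eq_measure emeasure_pmf_single)
qed (simp_all add: countable_finite F(1))

lemma prob_space_std_normal: "prob_space std_normal"
  using real_dist_normal_dist unfolding std_normal_def real_distribution_def by simp

lemma sets_std_normal: "sets std_normal = sets borel"
  by (simp add: std_normal_def)

lemma emeasure_std_normal_singleton: "emeasure std_normal {x} = 0"
  by (simp add: std_normal_def emeasure_density nn_integral_null_set)

lemma prob_space_data_noise: "prob_space P1 \<Longrightarrow> prob_space (data_noise n P1)"
  unfolding data_noise_def by (intro prob_space_pair prob_space_PiM prob_space_std_normal)

lemma measurable_data_noise_permute:
  assumes "\<pi> permutes {1..n}"
  shows "(\<lambda>(D, e). (D \<circ> \<pi>, e \<circ> \<pi>)) \<in> measurable (data_noise n P1) (data_noise n P1)"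
  unfolding data_noise_def case_prod_beta'
  by (intro measurable_Pair measurable_compose[OF measurable_fst measurable_comp_permutes[OF assms]]
      measurable_compose[OF measurable_snd measurable_comp_permutes[OF assms]])

lemma distr_data_noise_permute:
  assumes "prob_space P1" and "\<pi> permutes {1..n}"
  shows "distr (data_noise n P1) (data_noise n P1) (\<lambda>(D, e). (D \<circ> \<pi>, e \<circ> \<pi>)) = data_noise n P1"
proof -
  let ?D = "PiM {1..n} (\<lambda>_. P1)" and ?E = "PiM {1..n} (\<lambda>_. std_normal)"
  have "data_noise n P1 = distr ?D ?D (\<lambda>D. D \<circ> \<pi>) \<Otimes>\<^sub>M distr ?E ?E (\<lambda>e. e \<circ> \<pi>)"
    unfolding data_noise_def distr_PiM_comp_permutes[OF assms]
      distr_PiM_comp_permutes[OF prob_space_std_normal assms(2)] ..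
  also have "\<dots> = distr (?D \<Otimes>\<^sub>M ?E) (?D \<Otimes>\<^sub>M ?E) (\<lambda>(D, e). (D \<circ> \<pi>, e \<circ> \<pi>))"
    using distr_PiM_comp_permutes[OF prob_space_std_normal assms(2)]
    by (intro pair_measure_distr measurable_comp_permutes assms(2))
      (simp add: prob_space_PiM prob_space_std_normal prob_space_imp_sigma_finite)
  finally show ?thesis by (simp add: data_noise_def)
qed

lemma measurable_permutation_stats:
  assumes "sets Q = sets borel"
  shows "(\<lambda>P. \<lambda>b\<in>{1..B}. A (vec_list n (P b))) \<in> measurable (PiM {1..B} (\<lambda>_. unif_perm n)) (PiM {1..B} (\<lambda>_. Q))"
proof (rule measurable_restrict)
  fix b assume "b \<in> {1..B}"
  moreover have "(\<lambda>\<pi>. A (vec_list n \<pi>)) \<in> measurable (unif_perm n) Q"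
    using sets_eq_imp_space_eq[OF assms] by (simp add: unif_perm_def)
  ultimately show "(\<lambda>P. A (vec_list n (P b))) \<in> measurable (PiM {1..B} (\<lambda>_. unif_perm n)) Q"
    by (intro measurable_compose[OF measurable_component_singleton])
qed

locale symmetric_score_model =
  fixes n :: nat and P1 :: "'z measure" and S :: "'z \<Rightarrow> (nat \<Rightarrow> 'z) \<Rightarrow> real" and \<epsilon> :: real
  assumes prob_space_P1: "prob_space P1"
    and symmetric: "symmetric_transformation n P1 S"
    and eps_pos: "\<epsilon> > 0"
begin

definition score_rank :: "(nat \<Rightarrow> 'z) \<times> (nat \<Rightarrow> real) \<Rightarrow> nat \<Rightarrow> nat" where
  "score_rank \<omega> = rank_perm n (scores S \<epsilon> (fst \<omega>) (snd \<omega>))"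

lemma measurable_scores:
  assumes "i \<in> {1..n}"
  shows "(\<lambda>\<omega>. scores S \<epsilon> (fst \<omega>) (snd \<omega>) i) \<in> borel_measurable (data_noise n P1)"
proof -
  have "(\<lambda>\<omega>. (fst \<omega> i, fst \<omega>)) \<in> measurable (data_noise n P1) (P1 \<Otimes>\<^sub>M PiM {1..n} (\<lambda>_. P1))"
    unfolding data_noise_def
    by (intro measurable_Pair measurable_compose[OF measurable_fst measurable_component_singleton[OF assms]]
        measurable_fst)
  moreover have "(\<lambda>(z, D). S z D) \<in> borel_measurable (P1 \<Otimes>\<^sub>M PiM {1..n} (\<lambda>_. P1))"
    using symmetric by (simp add: symmetric_transformation_def)
  ultimately have "(\<lambda>\<omega>. (\<lambda>(z, D). S z D) (fst \<omega> i, fst \<omega>)) \<in> borel_measurable (data_noise n P1)"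
    by (rule measurable_compose)
  moreover have "(\<lambda>\<omega>. snd \<omega> i) \<in> borel_measurable (data_noise n P1)"
    using measurable_compose[OF measurable_snd measurable_component_singleton[OF assms, of "\<lambda>_. std_normal"],
        of "PiM {1..n} (\<lambda>_. P1)"]
    unfolding data_noise_def by (simp add: measurable_cong_sets[OF refl sets_std_normal])
  ultimately show ?thesis
    unfolding scores_def by simp
qed

lemma measurable_score_rank: "score_rank \<in> measurable (data_noise n P1) (count_space UNIV)"
proof -
  \<comment> \<open>\<open>score_rank\<close> factors through the list of ranks, which ranges over a countable type.\<close>
  let ?ranks = "\<lambda>\<omega>. vec_list n (rank n (scores S \<epsilon> (fst \<omega>) (snd \<omega>)))"
  have "?ranks \<in> measurable (data_noise n P1) (count_space UNIV)"
    unfolding vec_list_def rank_def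
    by (intro measurable_map_count_space measurable_card_Collect borel_measurable_le measurable_scores) auto
  then have "(\<lambda>\<omega>. (\<lambda>xs i. if i \<in> {1..n} then xs ! (i - 1) else i) (?ranks \<omega>))
      \<in> measurable (data_noise n P1) (count_space UNIV)"
    by (rule measurable_compose) (rule measurable_count_space)
  moreover have "score_rank = (\<lambda>\<omega>. (\<lambda>xs i. if i \<in> {1..n} then xs ! (i - 1) else i) (?ranks \<omega>))"
    by (auto simp del: upt_Suc simp: fun_eq_iff score_rank_def rank_perm_def vec_list_def nth_map_upt)
  ultimately show ?thesis by simp
qed

lemma AE_inj_scores: "AE \<omega> in data_noise n P1. inj_on (scores S \<epsilon> (fst \<omega>) (snd \<omega>)) {1..n}"
proof -
  let ?D = "PiM {1..n} (\<lambda>_. P1)" and ?E = "PiM {1..n} (\<lambda>_. std_normal)"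
  interpret E: prob_space ?E by (intro prob_space_PiM prob_space_std_normal)
  have no_tie: "AE \<omega> in data_noise n P1. scores S \<epsilon> (fst \<omega>) (snd \<omega>) i \<noteq> scores S \<epsilon> (fst \<omega>) (snd \<omega>) j"
    if ij: "i \<in> {1..n}" "j \<in> {1..n}" "i \<noteq> j" for i j
  proof (rule AE_I')
    let ?Z = "{\<omega> \<in> space (data_noise n P1). scores S \<epsilon> (fst \<omega>) (snd \<omega>) i = scores S \<epsilon> (fst \<omega>) (snd \<omega>) j}"
    have Z: "?Z \<in> sets (?D \<Otimes>\<^sub>M ?E)"
      using borel_measurable_eq[OF measurable_scores[OF ij(1)] measurable_scores[OF ij(2)]]
      by (simp add: data_noise_def)
    have "emeasure (?D \<Otimes>\<^sub>M ?E) ?Z = (\<integral>\<^sup>+D. emeasure ?E (Pair D -` ?Z) \<partial>?D)"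
      by (rule E.emeasure_pair_measure_alt[OF Z])
    also have "\<dots> = 0"
    proof (rule nn_integral_zero'[OF AE_I2])
      fix D
      let ?a = "(S (D j) D - S (D i) D) / \<epsilon>"
      \<comment> \<open>Given the data, a tie between the scores pins down the difference of two noise coordinates.\<close>
      have "{e \<in> space ?E. e i = ?a + e j} \<in> null_sets ?E"
        using ij by (intro PiM_diagonal_shift_null prob_space_std_normal sets_std_normal
            emeasure_std_normal_singleton) auto
      moreover have "Pair D -` ?Z \<subseteq> {e \<in> space ?E. e i = ?a + e j}"
        using eps_pos by (auto simp: scores_def data_noise_def space_pair_measure field_simps)
      ultimately have "Pair D -` ?Z \<in> null_sets ?E"
        by (rule null_sets_subset[OF _ sets_Pair1[OF Z]])
      then show "emeasure ?E (Pair D -` ?Z) = 0" by (rule null_setsD1)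
    qed
    finally show "?Z \<in> null_sets (data_noise n P1)"
      using Z by (simp add: data_noise_def null_sets_def)
  qed auto
  have "AE \<omega> in data_noise n P1. \<forall>i\<in>{1..n}. \<forall>j\<in>{1..n}. i \<noteq> j \<longrightarrow>
      scores S \<epsilon> (fst \<omega>) (snd \<omega>) i \<noteq> scores S \<epsilon> (fst \<omega>) (snd \<omega>) j"
    using no_tie by (simp add: AE_finite_all)
  then show ?thesis by eventually_elim (auto simp: inj_on_def)
qed

lemma score_rank_permute:
  assumes \<pi>: "\<pi> permutes {1..n}" and D: "D \<in> space (PiM {1..n} (\<lambda>_. P1))"
  shows "score_rank (D \<circ> \<pi>, e \<circ> \<pi>) = score_rank (D, e) \<circ> \<pi>"
  unfolding score_rank_def fst_conv snd_conv
proof (rule rank_perm_comp_permutes[OF \<pi>])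
  fix i assume "i \<in> {1..n}"
  then have "\<pi> i \<in> {1..n}" using \<pi> by (metis permutes_in_image)
  then have "D (\<pi> i) \<in> space P1"
    using D by (auto simp: space_PiM PiE_iff)
  then show "scores S \<epsilon> (D \<circ> \<pi>) (e \<circ> \<pi>) i = scores S \<epsilon> D e (\<pi> i)"
    using symmetric D \<pi> by (simp add: symmetric_transformation_def scores_def)
qed

lemma prob_score_rank_eq_id:
  assumes \<sigma>: "\<sigma> permutes {1..n}"
  shows "measure (data_noise n P1) (score_rank -` {\<sigma>} \<inter> space (data_noise n P1))
       = measure (data_noise n P1) (score_rank -` {id} \<inter> space (data_noise n P1))"
proof -
  \<comment> \<open>Permuting the sample by \<open>inv \<sigma>\<close> preserves its law and maps the event of ranks \<open>\<sigma>\<close>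
    onto that of ranks \<open>id\<close>.\<close>
  let ?\<Omega> = "data_noise n P1"
  let ?T = "\<lambda>(D, e). (D \<circ> inv \<sigma>, e \<circ> inv \<sigma>)"
  have \<pi>: "inv \<sigma> permutes {1..n}" using \<sigma> by (rule permutes_inv)
  have T_rank: "score_rank (?T \<omega>) = score_rank \<omega> \<circ> inv \<sigma>" if \<omega>_space: "\<omega> \<in> space ?\<Omega>" for \<omega>
  proof -
    obtain D e where \<omega>: "\<omega> = (D, e)" and D: "D \<in> space (PiM {1..n} (\<lambda>_. P1))"
      using \<omega>_space by (cases \<omega>) (auto simp: data_noise_def space_pair_measure)
    show ?thesis unfolding \<omega> using score_rank_permute[OF \<pi> D] by simp
  qed
  have T_space: "?T \<omega> \<in> space ?\<Omega>" if "\<omega> \<in> space ?\<Omega>" for \<omega>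
    using measurable_space[OF measurable_data_noise_permute[OF \<pi>] that] .
  have "f \<circ> inv \<sigma> = id \<longleftrightarrow> f = \<sigma>" for f :: "nat \<Rightarrow> nat"
  proof
    assume "f \<circ> inv \<sigma> = id"
    then have "f \<circ> (inv \<sigma> \<circ> \<sigma>) = \<sigma>" by (simp add: o_assoc)
    then show "f = \<sigma>" by (simp add: permutes_inv_o(2)[OF \<sigma>])
  qed (simp add: permutes_inv_o(1)[OF \<sigma>])
  then have "?T -` (score_rank -` {id} \<inter> space ?\<Omega>) \<inter> space ?\<Omega> = score_rank -` {\<sigma>} \<inter> space ?\<Omega>"
    using T_rank T_space by auto
  moreover have "score_rank -` {id} \<inter> space ?\<Omega> \<in> sets ?\<Omega>"
    using measurable_score_rank by (rule measurable_sets) simp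
  then have "measure (distr ?\<Omega> ?\<Omega> ?T) (score_rank -` {id} \<inter> space ?\<Omega>)
      = measure ?\<Omega> (?T -` (score_rank -` {id} \<inter> space ?\<Omega>) \<inter> space ?\<Omega>)"
    by (rule measure_distr[OF measurable_data_noise_permute[OF \<pi>]])
  ultimately show ?thesis
    by (simp add: distr_data_noise_permute[OF prob_space_P1 \<pi>])
qed

lemma distr_score_rank: "distr (data_noise n P1) (count_space UNIV) score_rank = unif_perm n"
  unfolding unif_perm_def perms_def
proof (rule prob_space.distr_eq_pmf_of_set_if_equiprobable)
  show "AE \<omega> in data_noise n P1. score_rank \<omega> \<in> {\<pi>. \<pi> permutes {1..n}}"
    using AE_inj_scores
  proof eventually_elim
    case (elim \<omega>)
    show ?case unfolding score_rank_def mem_Collect_eq by (rule rank_perm_permutes[OF elim])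
  qed
  show "prob_space (data_noise n P1)" by (rule prob_space_data_noise[OF prob_space_P1])
  show "score_rank \<in> measurable (data_noise n P1) (count_space UNIV)" by (rule measurable_score_rank)
  show "finite {\<pi>. \<pi> permutes {1..n}}" by (rule finite_permutations) simp
  show "{\<pi>. \<pi> permutes {1..n}} \<noteq> {}" using permutes_id by blast
  fix \<sigma> \<tau> assume "\<sigma> \<in> {\<pi>. \<pi> permutes {1..n}}" "\<tau> \<in> {\<pi>. \<pi> permutes {1..n}}"
  then show "measure (data_noise n P1) (score_rank -` {\<sigma>} \<inter> space (data_noise n P1))
      = measure (data_noise n P1) (score_rank -` {\<tau>} \<inter> space (data_noise n P1))"
    using prob_score_rank_eq_id[of \<sigma>] prob_score_rank_eq_id[of \<tau>] by simp
qed

lemma test_stat_eq_score_rank: "test_stat n A S \<epsilon> D e = A (vec_list n (score_rank (D, e)))"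
  by (simp add: test_stat_def score_rank_def vec_list_rank_perm)

lemma measurable_test_stat: "(\<lambda>(D, e). test_stat n A S \<epsilon> D e) \<in> borel_measurable (data_noise n P1)"
  unfolding case_prod_beta' test_stat_eq_score_rank prod.collapse
  by (rule measurable_compose[OF measurable_score_rank]) simp

lemma distr_test_stat:
  "distr (data_noise n P1) borel (\<lambda>(D, e). test_stat n A S \<epsilon> D e)
     = distr (unif_perm n) borel (\<lambda>\<pi>. A (vec_list n \<pi>))"
proof -
  have "distr (data_noise n P1) borel (\<lambda>(D, e). test_stat n A S \<epsilon> D e)
      = distr (distr (data_noise n P1) (count_space UNIV) score_rank) borel (\<lambda>\<pi>. A (vec_list n \<pi>))"
    by (simp add: distr_distr[OF _ measurable_score_rank] comp_def case_prod_beta' test_stat_eq_score_rank)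
  then show ?thesis by (simp add: distr_score_rank)
qed

lemma measurable_observed_and_permutation_stats:
  assumes "sets Q = sets borel"
  shows "(\<lambda>((D, e), P, u). (test_stat n A S \<epsilon> D e, \<lambda>b\<in>{1..B}. A (vec_list n (P b)), u))
    \<in> measurable (full_space n B P1) (Q \<Otimes>\<^sub>M (PiM {1..B} (\<lambda>_. Q) \<Otimes>\<^sub>M uniform01))"
proof -
  have T: "(\<lambda>(D, e). test_stat n A S \<epsilon> D e) \<in> measurable (data_noise n P1) Q"
    using measurable_test_stat by (simp add: measurable_cong_sets[OF refl assms])
  have R: "(\<lambda>(P, u). (\<lambda>b\<in>{1..B}. A (vec_list n (P b)), u))
      \<in> measurable (PiM {1..B} (\<lambda>_. unif_perm n) \<Otimes>\<^sub>M uniform01) (PiM {1..B} (\<lambda>_. Q) \<Otimes>\<^sub>M uniform01)"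
    unfolding case_prod_beta'
    by (intro measurable_Pair measurable_compose[OF measurable_fst measurable_permutation_stats[OF assms]]
        measurable_snd)
  have "(\<lambda>x. ((\<lambda>(D, e). test_stat n A S \<epsilon> D e) (fst x),
        (\<lambda>(P, u). (\<lambda>b\<in>{1..B}. A (vec_list n (P b)), u)) (snd x)))
    \<in> measurable (full_space n B P1) (Q \<Otimes>\<^sub>M (PiM {1..B} (\<lambda>_. Q) \<Otimes>\<^sub>M uniform01))"
    unfolding full_space_def
    by (intro measurable_Pair measurable_compose[OF measurable_fst T] measurable_compose[OF measurable_snd R])
  then show ?thesis by (simp add: case_prod_beta')
qed

lemma prob_space_distr_test_stat:
  "prob_space (distr (data_noise n P1) borel (\<lambda>(D, e). test_stat n A S \<epsilon> D e))"
  using measurable_test_stat by (rule prob_space.prob_space_distr[OF prob_space_data_noise[OF prob_space_P1]])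

lemma distr_observed_and_permutation_stats:
  fixes A :: "nat list \<Rightarrow> real" and B :: nat
  defines "Q \<equiv> distr (data_noise n P1) borel (\<lambda>(D, e). test_stat n A S \<epsilon> D e)"
  shows "distr (full_space n B P1) (Q \<Otimes>\<^sub>M (PiM {1..B} (\<lambda>_. Q) \<Otimes>\<^sub>M uniform01))
      (\<lambda>((D, e), P, u). (test_stat n A S \<epsilon> D e, \<lambda>b\<in>{1..B}. A (vec_list n (P b)), u))
    = Q \<Otimes>\<^sub>M (PiM {1..B} (\<lambda>_. Q) \<Otimes>\<^sub>M uniform01)"
proof -
  let ?\<Pi> = "PiM {1..B} (\<lambda>_. unif_perm n)" and ?T = "\<lambda>(D, e). test_stat n A S \<epsilon> D e"
  let ?R = "\<lambda>(P, u). (\<lambda>b\<in>{1..B}. A (vec_list n (P b)), u)"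
  have Q: "prob_space Q" "sets Q = sets borel"
    using prob_space_distr_test_stat by (simp_all add: Q_def)
  have T: "?T \<in> measurable (data_noise n P1) Q"
    using measurable_test_stat by (simp add: Q_def)
  have G: "(\<lambda>P. \<lambda>b\<in>{1..B}. A (vec_list n (P b))) \<in> measurable ?\<Pi> (PiM {1..B} (\<lambda>_. Q))"
    by (rule measurable_permutation_stats[OF Q(2)])
  have "distr (unif_perm n) Q (\<lambda>\<pi>. A (vec_list n \<pi>)) = Q"
    unfolding Q_def distr_test_stat by (rule distr_cong) simp_all
  then have "distr ?\<Pi> (PiM {1..B} (\<lambda>_. Q)) (\<lambda>P. \<lambda>b\<in>{1..B}. A (vec_list n (P b))) = PiM {1..B} (\<lambda>_. Q)"
    using Q sets_eq_imp_space_eq[OF Q(2)]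
    by (intro distr_PiM_restrict_comp) (simp_all add: unif_perm_def prob_space_measure_pmf)
  then have distr_R: "distr (?\<Pi> \<Otimes>\<^sub>M uniform01) (PiM {1..B} (\<lambda>_. Q) \<Otimes>\<^sub>M uniform01) ?R
      = PiM {1..B} (\<lambda>_. Q) \<Otimes>\<^sub>M uniform01"
    using pair_measure_distr[OF G measurable_ident_sets[OF refl], of uniform01]
    by (simp add: prob_space_uniform01 prob_space_imp_sigma_finite)
  have R: "?R \<in> measurable (?\<Pi> \<Otimes>\<^sub>M uniform01) (PiM {1..B} (\<lambda>_. Q) \<Otimes>\<^sub>M uniform01)"
    unfolding case_prod_beta' by (intro measurable_Pair measurable_compose[OF measurable_fst G] measurable_snd)
  have distr_T: "distr (data_noise n P1) Q ?T = Q"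
    unfolding Q_def by (rule distr_cong) simp_all
  have "distr (full_space n B P1) (Q \<Otimes>\<^sub>M (PiM {1..B} (\<lambda>_. Q) \<Otimes>\<^sub>M uniform01)) (\<lambda>(\<omega>, r). (?T \<omega>, ?R r))
      = distr (data_noise n P1) Q ?T \<Otimes>\<^sub>M distr (?\<Pi> \<Otimes>\<^sub>M uniform01) (PiM {1..B} (\<lambda>_. Q) \<Otimes>\<^sub>M uniform01) ?R"
    unfolding full_space_def
    by (rule pair_measure_distr[OF T R, symmetric])
      (unfold distr_R, intro prob_space_imp_sigma_finite prob_space_pair prob_space_PiM Q prob_space_uniform01)
  also have "\<dots> = Q \<Otimes>\<^sub>M (PiM {1..B} (\<lambda>_. Q) \<Otimes>\<^sub>M uniform01)"
    unfolding distr_T distr_R ..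
  finally show ?thesis by (simp add: case_prod_beta')
qed

lemma distr_pval_uniform01:
  "distr (full_space n B P1) lborel (\<lambda>((D, e), P, u). pval n B A (test_stat n A S \<epsilon> D e) P u) = uniform01"
proof -
  let ?Q = "distr (data_noise n P1) borel (\<lambda>(D, e). test_stat n A S \<epsilon> D e)"
  let ?stats = "\<lambda>((D, e), P, u). (test_stat n A S \<epsilon> D e, \<lambda>b\<in>{1..B}. A (vec_list n (P b)), u)"
  have Q: "prob_space ?Q" "sets ?Q = sets borel"
    using prob_space_distr_test_stat by simp_all
  have "(\<lambda>((D, e), P, u). pval n B A (test_stat n A S \<epsilon> D e) P u) = (\<lambda>(t, z, u). pvalue B t z u) \<circ> ?stats"
    by (simp add: fun_eq_iff pval_def pvalue_def cong: conj_cong)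
  then have "distr (full_space n B P1) lborel (\<lambda>((D, e), P, u). pval n B A (test_stat n A S \<epsilon> D e) P u)
      = distr (distr (full_space n B P1) (?Q \<Otimes>\<^sub>M (PiM {1..B} (\<lambda>_. ?Q) \<Otimes>\<^sub>M uniform01)) ?stats) lborel
          (\<lambda>(t, z, u). pvalue B t z u)"
    using measurable_pvalue[OF Q(2)] measurable_observed_and_permutation_stats[OF Q(2)]
    by (simp add: distr_distr)
  also have "\<dots> = uniform01"
    unfolding distr_observed_and_permutation_stats by (rule distr_pvalue_uniform01[OF Q])
  finally show ?thesis .
qed

end

theorem theorem1:
  fixes P1 :: "'z measure" and S :: "'z \<Rightarrow> (nat \<Rightarrow> 'z) \<Rightarrow> real"
    and A :: "nat list \<Rightarrow> real" and n :: nat and \<epsilon> :: real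
  assumes "prob_space P1"
    and "symmetric_transformation n P1 S"
    and "\<epsilon> > 0"
  shows "distr (data_noise n P1) borel (\<lambda>(D, e). test_stat n A S \<epsilon> D e)
           = distr (unif_perm n) borel (\<lambda>\<pi>. A (vec_list n \<pi>)) \<and>
         (\<forall>B::nat. B \<ge> 1 \<longrightarrow>
           distr (full_space n B P1) lborel
             (\<lambda>((D, e), P, u). pval n B A (test_stat n A S \<epsilon> D e) P u)
           = uniform_measure lborel {0..1})"
proof -
  interpret symmetric_score_model n P1 S \<epsilon>
    by (rule symmetric_score_model.intro) (fact assms)+
  show ?thesis using distr_test_stat distr_pval_uniform01 by blast
qed

end
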